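(* Let $k$ be an algebraically closed field of characteristic $0$, $d\ge3$, and let $(V,\Theta)$ be a regular indecomposable $d$-linear space over $k$ with maximal center. Let $\mathbf{G}$ be the group of $k$-algebra automorphisms of $\mathrm{Cent}_k(\Theta)$ and $\chi:\mathcal{O}(\Theta)\to\mathbf{G}$, $\chi(\sigma)(f)=\sigma f\sigma^{-1}$. Let $\mu_d=\{\zeta\in k:\zeta^d=1\}$, identified with $\{\zeta\,\mathrm{id}_V\}\subseteq\mathcal{O}(\Theta)$. Then the sequence $1\to\mu_d\to\mathcal{O}(\Theta)\xrightarrow{\chi}\mathbf{G}$ is exact, i.e. $\ker\chi=\mu_d$.
   Context: A $d$-linear space is $(V,\Theta)$ with $V$ finite-dimensional over $k$ and $\Theta:V^d\to k$ symmetric $d$-linear. It is regular if $\Theta(w,u_2,\dots,u_d)=0$ for all $u_i$ implies $w=0$. Orthogonal sum: $(V_1\oplus V_2,\Theta_1\perp\Theta_2)$ with $(\Theta_1\perp\Theta_2)(v_1+u_1,\dots,v_d+u_d)=\Theta_1(v_1,\dots,v_d)+\Theta_2(u_1,\dots,u_d)$; the space is indecomposable if not isomorphic to an orthogonal sum of two (nonzero) $d$-linear spaces. Center: $\mathrm{Cent}_k(\Theta)=\{f\in\mathrm{End}_k(V):\Theta(f u_1,u_2,\dots,u_d)=\Theta(u_1,fu_2,\dots,u_d)\ \forall u_i\}$; the space has maximal center if $\mathrm{Cent}_k(\Theta)$ is a maximal commutative subalgebra of $\mathrm{End}_k(V)$. $\mathcal{O}(\Theta)=\{\sigma\in GL_k(V):\Theta(\sigma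 u_1,\dots,\sigma u_d)=\Theta(u_1,\dots,u_d)\ \forall u_i\}$. *)

theory Defs
  imports "HOL-Analysis.Analysis" "HOL-Computational_Algebra.Polynomial"
begin

text \<open>Vector space V = k^n (n = CARD('n) >= 1); endomorphisms = n x n matrices.
  A d-ary form is a function Theta on argument tuples u :: nat => k^n, of which
  only the slots 0..d-1 are used.\<close>

definition alg_closed_field :: "'k::field itself \<Rightarrow> bool" where
  "alg_closed_field _ \<longleftrightarrow> (\<forall>p :: 'k poly. degree p \<ge> 1 \<longrightarrow> (\<exists>x. poly p x = 0))"

definition d_linear_form :: "nat \<Rightarrow> ((nat \<Rightarrow> 'k::field ^'n) \<Rightarrow> 'k) \<Rightarrow> bool" where
  "d_linear_form d \<Theta> \<longleftrightarrow>
     (\<forall>u w. (\<forall>i<d. u i = w i) \<longrightarrow> \<Theta> u = \<Theta> w) \<and>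
     (\<forall>u i x y. i < d \<longrightarrow> \<Theta> (u(i := x + y)) = \<Theta> (u(i := x)) + \<Theta> (u(i := y))) \<and>
     (\<forall>u i c x. i < d \<longrightarrow> \<Theta> (u(i := c *s x)) = c * \<Theta> (u(i := x)))"

definition symmetric_form :: "nat \<Rightarrow> ((nat \<Rightarrow> 'k::field ^'n) \<Rightarrow> 'k) \<Rightarrow> bool" where
  "symmetric_form d \<Theta> \<longleftrightarrow> (\<forall>u p. p permutes {..<d} \<longrightarrow> \<Theta> (u \<circ> p) = \<Theta> u)"

definition regular_form :: "nat \<Rightarrow> ((nat \<Rightarrow> 'k::field ^'n) \<Rightarrow> 'k) \<Rightarrow> bool" where
  "regular_form d \<Theta> \<longleftrightarrow> (\<forall>w. (\<forall>u. \<Theta> (u(0 := w)) = 0) \<longrightarrow> w = 0)"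

definition is_subspace :: "('k::field ^'n) set \<Rightarrow> bool" where
  "is_subspace W \<longleftrightarrow> 0 \<in> W \<and> (\<forall>x\<in>W. \<forall>y\<in>W. x + y \<in> W) \<and> (\<forall>c. \<forall>x\<in>W. c *s x \<in> W)"

text \<open>Internal orthogonal decomposition into two nonzero subspaces; being isomorphic to an
  orthogonal sum of two nonzero d-linear spaces is equivalent to this.\<close>
definition decomposable_form :: "nat \<Rightarrow> ((nat \<Rightarrow> 'k::field ^'n) \<Rightarrow> 'k) \<Rightarrow> bool" where
  "decomposable_form d \<Theta> \<longleftrightarrow>
     (\<exists>V1 V2. is_subspace V1 \<and> is_subspace V2 \<and> V1 \<noteq> {0} \<and> V2 \<noteq> {0} \<and>
        V1 \<inter> V2 = {0} \<and> (\<forall>x. \<exists>a\<in>V1. \<exists>b\<in>V2. x = a + b) \<and>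
        (\<forall>v w. (\<forall>i<d. v i \<in> V1 \<and> w i \<in> V2) \<longrightarrow> \<Theta> (\<lambda>i. v i + w i) = \<Theta> v + \<Theta> w))"

definition indecomposable_form :: "nat \<Rightarrow> ((nat \<Rightarrow> 'k::field ^'n) \<Rightarrow> 'k) \<Rightarrow> bool" where
  "indecomposable_form d \<Theta> \<longleftrightarrow> \<not> decomposable_form d \<Theta>"

definition cent :: "((nat \<Rightarrow> 'k::field ^'n) \<Rightarrow> 'k) \<Rightarrow> ('k ^'n ^'n) set" where
  "cent \<Theta> = {f. \<forall>u. \<Theta> (u(0 := f *v u 0)) = \<Theta> (u(1 := f *v u 1))}"

definition mscale :: "'k::field \<Rightarrow> 'k ^'n ^'n \<Rightarrow> 'k ^'n ^'n" where
  "mscale c A = (\<chi> i j. c * A $ i $ j)"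

definition comm_subalgebra :: "('k::field ^'n ^'n) set \<Rightarrow> bool" where
  "comm_subalgebra A \<longleftrightarrow> mat 1 \<in> A \<and> (\<forall>x\<in>A. \<forall>y\<in>A. x + y \<in> A \<and> x ** y \<in> A \<and> x ** y = y ** x)
     \<and> (\<forall>c. \<forall>x\<in>A. mscale c x \<in> A)"

definition maximal_comm_subalgebra :: "('k::field ^'n ^'n) set \<Rightarrow> bool" where
  "maximal_comm_subalgebra A \<longleftrightarrow> comm_subalgebra A \<and> (\<forall>B. comm_subalgebra B \<and> A \<subseteq> B \<longrightarrow> B = A)"

definition has_maximal_center :: "((nat \<Rightarrow> 'k::field ^'n) \<Rightarrow> 'k) \<Rightarrow> bool" where
  "has_maximal_center \<Theta> \<longleftrightarrow> maximal_comm_subalgebra (cent \<Theta>)"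

definition alg_auts :: "('k::field ^'n ^'n) set \<Rightarrow> ('k ^'n ^'n \<Rightarrow> 'k ^'n ^'n) set" where
  "alg_auts A = {\<phi>. bij_betw \<phi> A A \<and> \<phi> (mat 1) = mat 1 \<and>
     (\<forall>x\<in>A. \<forall>y\<in>A. \<phi> (x + y) = \<phi> x + \<phi> y \<and> \<phi> (x ** y) = \<phi> x ** \<phi> y) \<and>
     (\<forall>c. \<forall>x\<in>A. \<phi> (mscale c x) = mscale c (\<phi> x))}"

definition orth_group :: "((nat \<Rightarrow> 'k::field ^'n) \<Rightarrow> 'k) \<Rightarrow> ('k ^'n ^'n) set" where
  "orth_group \<Theta> = {\<sigma>. invertible \<sigma> \<and> (\<forall>u. \<Theta> (\<lambda>i. \<sigma> *v u i) = \<Theta> u)}"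

definition chi :: "'k::field ^'n ^'n \<Rightarrow> 'k ^'n ^'n \<Rightarrow> 'k ^'n ^'n" where
  "chi \<sigma> f = \<sigma> ** f ** matrix_inv \<sigma>"

definition roots_of_unity_id :: "nat \<Rightarrow> ('k::field ^'n ^'n) set" where
  "roots_of_unity_id d = {mat \<zeta> | \<zeta>. \<zeta> ^ d = 1}"

end

theory Submission
  imports Defs
begin

(* An orthogonal map \<sigma> that fixes the centre pointwise commutes with the maximal commutative
  algebra Cent(\<Theta>), hence lies in it.  Central maps can be moved from slot to slot of \<Theta>, so
  \<Theta>(\<sigma>u_1, ..., \<sigma>u_d) = \<Theta>(\<sigma>^d u_1, u_2, ..., u_d), and regularity forces \<sigma>^d = 1.
  Indecomposability means that Cent(\<Theta>) has no idempotents besides 0 and 1, and in such a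
  commutative algebra over an algebraically closed field every element annihilated by a
  polynomial with simple roots, here x^d - 1 in characteristic 0, is a scalar.  Conversely
  \<zeta> id with \<zeta>^d = 1 is orthogonal and central. *)

lemma matrix_inv_right: "invertible A \<Longrightarrow> A ** matrix_inv A = (mat 1 :: 'k::semiring_1^'n^'n)"
  and matrix_inv_left: "invertible A \<Longrightarrow> matrix_inv A ** A = (mat 1 :: 'k::semiring_1^'n^'n)"
  unfolding invertible_def matrix_inv_def by (metis (mono_tags, lifting) someI_ex)+

lemma matrix_add_rdistrib: "(A + B :: 'k::semiring_1^'m^'n) ** C = A ** C + B ** C"
  by (simp add: matrix_matrix_mult_def vec_eq_iff algebra_simps sum.distrib)

lemma matrix_diff_ldistrib: "(A :: 'k::ring_1^'m^'n) ** (B - C) = A ** B - A ** C"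
  by (simp add: matrix_matrix_mult_def vec_eq_iff algebra_simps sum_subtractf)

lemma matrix_diff_rdistrib: "(A - B :: 'k::ring_1^'m^'n) ** C = A ** C - B ** C"
  by (simp add: matrix_matrix_mult_def vec_eq_iff algebra_simps sum_subtractf)

lemma mat_mult_left: "mat c ** (A :: 'k::semiring_1^'m^'n) = (\<chi> i j. c * A $ i $ j)"
  by (simp add: matrix_matrix_mult_def mat_def vec_eq_iff if_distrib if_distribR sum.delta cong: if_cong)

lemma mat_mult_commute: "mat c ** A = A ** (mat c :: 'k::comm_semiring_1^'n^'n)"
  by (simp add: matrix_matrix_mult_def mat_def vec_eq_iff if_distrib if_distribR mult.commute cong: if_cong)

lemma mscale_eq_mat_mult: "mscale c A = mat c ** A"
  by (simp add: mscale_def mat_mult_left)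

lemma mat_mult_mat: "mat a ** mat b = (mat (a * b) :: 'k::semiring_1^'n^'n)"
  by (simp add: mat_mult_left) (simp add: mat_def vec_eq_iff)

lemma mat_add_mat: "mat a + mat b = (mat (a + b) :: 'k::semiring_1^'n^'n)"
  by (simp add: mat_def vec_eq_iff)

lemma mat_inject: "mat a = (mat b :: 'k::zero^'n^'n) \<longleftrightarrow> a = b"
proof
  assume "mat a = (mat b :: 'k^'n^'n)"
  then have "mat a $ i $ i = (mat b :: 'k^'n^'n) $ i $ i" for i by simp
  then show "a = b" by (simp add: mat_def)
qed simp

lemma matrix_vector_mult_mat: "mat c *v x = c *s (x :: 'k::semiring_1^'n)"
  by (simp add: matrix_vector_mult_def mat_def vec_eq_iff if_distrib if_distribR cong del: if_weak_cong)

lemma comm_subalgebra_mat: "comm_subalgebra S \<Longrightarrow> mat c \<in> S"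
  unfolding comm_subalgebra_def by (metis mscale_eq_mat_mult matrix_mul_rid)

lemma comm_subalgebra_diff:
  assumes "comm_subalgebra S" and "A \<in> S" and "B \<in> S"
  shows "A - B \<in> S"
proof -
  have "A - B = A + mscale (-1) B" by (simp add: mscale_def vec_eq_iff)
  then show ?thesis using assms unfolding comm_subalgebra_def by metis
qed

fun matpow :: "'k::semiring_1^'n^'n \<Rightarrow> nat \<Rightarrow> 'k^'n^'n" where
  "matpow A 0 = mat 1"
| "matpow A (Suc m) = A ** matpow A m"

lemma matpow_commute: "matpow A m ** A = A ** matpow A m"
  by (induction m) (simp_all add: matrix_mul_assoc[symmetric])

lemma matpow_idempotent: "A ** A = A \<Longrightarrow> 0 < m \<Longrightarrow> matpow A m = A"
proof (induction m)
  case (Suc m)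
  then show ?case by (cases m) simp_all
qed simp

lemma matpow_mat: "matpow (mat c) m = (mat (c ^ m) :: 'k::comm_semiring_1^'n^'n)"
  by (induction m) (simp_all add: mat_mult_mat)

definition poly_mat :: "'k::field poly \<Rightarrow> 'k^'n^'n \<Rightarrow> 'k^'n^'n" where
  "poly_mat p A = fold_coeffs (\<lambda>a M. mat a + A ** M) p 0"

lemma poly_mat_0 [simp]: "poly_mat 0 A = 0"
  by (simp add: poly_mat_def)

lemma poly_mat_pCons [simp]: "poly_mat (pCons a p) A = mat a + A ** poly_mat p A"
  by (cases "p = 0 \<and> a = 0") (auto simp: poly_mat_def)

lemma poly_mat_add: "poly_mat (p + q) A = poly_mat p A + poly_mat q A"
proof (induction p arbitrary: q rule: pCons_induct)
  case (pCons a p)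
  obtain b q' where "q = pCons b q'" by (cases q)
  then show ?case
    using pCons.IH[of q'] by (simp add: matrix_add_ldistrib mat_add_mat[symmetric] algebra_simps)
qed simp

lemma poly_mat_diff: "poly_mat (p - q) A = poly_mat p A - poly_mat q A"
  using poly_mat_add[of "p - q" q A] by simp

lemma poly_mat_smult: "poly_mat (smult c p) A = mat c ** poly_mat p A"
  by (induction p rule: pCons_induct)
    (simp_all add: matrix_add_ldistrib mat_mult_mat matrix_mul_assoc mat_mult_commute[of c A])

lemma poly_mat_mult: "poly_mat (p * q) A = poly_mat p A ** poly_mat q A"
  by (induction p rule: pCons_induct)
    (simp_all add: poly_mat_add poly_mat_smult matrix_add_rdistrib matrix_mul_assoc)

lemma poly_mat_monom_1: "poly_mat (monom 1 m) A = matpow A m"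
  by (induction m) (simp_all add: monom_0 monom_Suc)

lemma poly_mat_in_comm_subalgebra:
  assumes S: "comm_subalgebra S" and "A \<in> S"
  shows "poly_mat p A \<in> S"
proof (induction p rule: pCons_induct)
  case 0
  show ?case using comm_subalgebra_mat[OF S, of 0] by simp
next
  case (pCons a p)
  then show ?case
    using S \<open>A \<in> S\<close> comm_subalgebra_mat[OF S, of a] unfolding comm_subalgebra_def by simp
qed

lemma poly_mat_mult_eigen:
  assumes "A ** Q = mat z ** Q"
  shows "poly_mat p A ** Q = mat (poly p z) ** Q"
proof (induction p rule: pCons_induct)
  case (pCons a p)
  have "poly_mat (pCons a p) A ** Q = mat a ** Q + A ** (mat (poly p z) ** Q)"
    by (simp add: matrix_add_rdistrib matrix_mul_assoc pCons.IH[symmetric])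
  also have "A ** (mat (poly p z) ** Q) = mat (poly p z) ** (mat z ** Q)"
    by (metis assms matrix_mul_assoc mat_mult_commute)
  finally show ?case
    by (simp add: matrix_mul_assoc mat_mult_mat matrix_add_rdistrib[symmetric] mat_add_mat mult.commute)
qed simp

lemma poly_mat_linear: "poly_mat [:-z, 1:] A = A - mat z"
  by simp (simp add: mat_def vec_eq_iff)

lemma rsquarefree_linear_factor:
  fixes q :: "'k::idom poly"
  assumes "rsquarefree ([:-z, 1:] * q)"
  shows "rsquarefree q" and "poly q z \<noteq> 0"
proof -
  have q0: "q \<noteq> 0" using assms by (auto simp: rsquarefree_def)
  have ord: "order a ([:-z, 1:] * q) = order a [:-z, 1:] + order a q" for a
    using q0 by (intro order_mult) (metis mult_eq_0_iff pCons_eq_0_iff one_neq_zero)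
  have le1: "order a ([:-z, 1:] * q) \<le> 1" for a
    using assms unfolding rsquarefree_def by (metis le_less less_one)
  then show "rsquarefree q"
    unfolding rsquarefree_def using q0 ord by (metis add_leE le_less less_one)
  have "order z [:-z, 1:] = 1"
    using order_power_n_n[of z 1] by (simp add: monom_0)
  then have "order z q = 0" using le1[of z] ord[of z] by simp
  then show "poly q z \<noteq> 0" using q0 by (simp add: order_root)
qed

(* (A - z) q(A) = 0 says that A acts as z on the range of q(A), so q(A)^2 = q(z) q(A). *)
lemma poly_mat_linear_factor_idempotent:
  fixes A :: "'k::field^'n^'n"
  assumes p: "poly_mat ([:-z, 1:] * q) A = 0" and qz: "poly q z \<noteq> 0"
  defines "e \<equiv> mat (inverse (poly q z)) ** poly_mat q A"
  shows "e ** e = e" and "A ** e = mat z ** e" and "poly_mat q A = mat (poly q z) ** e"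
proof -
  define Q where "Q = poly_mat q A"
  define s where "s = inverse (poly q z)"
  have "(A - mat z) ** Q = 0"
    using p unfolding Q_def poly_mat_mult poly_mat_linear .
  then have AQ: "A ** Q = mat z ** Q" by (simp add: matrix_diff_rdistrib)
  have "e ** e = mat s ** (mat s ** (Q ** Q))"
    unfolding e_def s_def Q_def by (metis matrix_mul_assoc mat_mult_commute)
  also have "\<dots> = mat (s * (s * poly q z)) ** Q"
    using poly_mat_mult_eigen[OF AQ] by (simp add: Q_def matrix_mul_assoc mat_mult_mat)
  also have "s * (s * poly q z) = s"
    using qz by (simp add: s_def)
  finally show "e ** e = e" by (simp add: e_def s_def Q_def)
  show "A ** e = mat z ** e"
    unfolding e_def Q_def[symmetric] by (metis AQ matrix_mul_assoc mat_mult_commute)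
  show "poly_mat q A = mat (poly q z) ** e"
    using qz by (simp add: e_def matrix_mul_assoc mat_mult_mat)
qed

lemma scalar_if_rsquarefree_annihilator:
  fixes A :: "'k::field^'n^'n"
  assumes alg: "alg_closed_field TYPE('k)" and S: "comm_subalgebra S" and "A \<in> S"
    and idem: "\<And>e. e \<in> S \<Longrightarrow> e ** e = e \<Longrightarrow> e = 0 \<or> e = mat 1"
    and "rsquarefree p" and "poly_mat p A = 0"
  shows "\<exists>c. A = mat c"
  using assms(5,6)
proof (induction "degree p" arbitrary: p rule: less_induct)
  case less
  have "p \<noteq> 0" using less.prems(1) by (simp add: rsquarefree_def)
  show ?case
  proof (cases "degree p = 0")
    case True
    then obtain c where "p = [:c:]" by (metis degree_eq_zeroE)
    then have "mat c = (mat 0 :: 'k^'n^'n)" using less.prems(2) by simp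
    then show ?thesis using \<open>p = [:c:]\<close> \<open>p \<noteq> 0\<close> unfolding mat_inject by simp
  next
    case False
    then obtain z where "poly p z = 0" using alg unfolding alg_closed_field_def by force
    then obtain q where p: "p = [:-z, 1:] * q" by (metis dvdE poly_eq_0_iff_dvd)
    then have q: "rsquarefree q" "poly q z \<noteq> 0"
      using rsquarefree_linear_factor less.prems(1) by blast+
    have "degree q < degree p"
      using \<open>p \<noteq> 0\<close> unfolding p by (subst degree_mult_eq) auto
    define e where "e = mat (inverse (poly q z)) ** poly_mat q A"
    note e = poly_mat_linear_factor_idempotent[OF less.prems(2)[unfolded p] q(2), folded e_def]
    have "e \<in> S"
      using S poly_mat_in_comm_subalgebra[OF S \<open>A \<in> S\<close>] comm_subalgebra_mat[OF S]
      unfolding e_def comm_subalgebra_def by blast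
    then consider "e = 0" | "e = mat 1" using idem e(1) by blast
    then show ?thesis
    proof cases
      case 1
      then have "poly_mat q A = 0" using e(3) by simp
      then show ?thesis using less.hyps \<open>degree q < degree p\<close> q(1) by blast
    next
      case 2
      then show ?thesis using e(2) by auto
    qed
  qed
qed

lemma scalar_if_matpow_eq_id:
  fixes A :: "'k::field_char_0^'n^'n"
  assumes alg: "alg_closed_field TYPE('k)" and S: "comm_subalgebra S" and "A \<in> S"
    and idem: "\<And>e. e \<in> S \<Longrightarrow> e ** e = e \<Longrightarrow> e = 0 \<or> e = mat 1"
    and "0 < d" and pow: "matpow A d = mat 1"
  shows "\<exists>c. A = mat c \<and> c ^ d = 1"
proof -
  define p :: "'k poly" where "p = monom 1 d - 1"
  have "poly (pderiv p) a \<noteq> 0" if "poly p a = 0" for a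
  proof -
    from that have "a ^ d = 1" by (simp add: p_def poly_monom)
    then have "a \<noteq> 0" using \<open>0 < d\<close> by (metis power_0_left less_not_refl zero_neq_one)
    then show ?thesis using \<open>0 < d\<close> by (simp add: p_def pderiv_diff pderiv_monom poly_monom)
  qed
  then have "rsquarefree p" unfolding rsquarefree_roots by blast
  moreover have "poly_mat p A = 0"
    by (simp add: p_def poly_mat_diff poly_mat_monom_1 pow one_pCons)
  ultimately obtain c where c: "A = mat c"
    using scalar_if_rsquarefree_annihilator[OF alg S \<open>A \<in> S\<close> idem] by blast
  with pow have "mat (c ^ d) = (mat 1 :: 'k^'n^'n)" by (simp add: matpow_mat)
  with c show ?thesis unfolding mat_inject by blast
qed

lemma maximal_comm_subalgebra_commutant:
  assumes max: "maximal_comm_subalgebra S" and comm: "\<forall>f\<in>S. A ** f = f ** A"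
  shows "A \<in> S"
proof -
  define C where "C = {X. \<forall>Y \<in> insert A S. X ** Y = Y ** X}"
  define D where "D = {X. \<forall>Y \<in> C. X ** Y = Y ** X}"
  have S_comm: "comm_subalgebra S" using max by (simp add: maximal_comm_subalgebra_def)
  have "insert A S \<subseteq> C"
    using comm S_comm unfolding C_def comm_subalgebra_def by auto
  then have "D \<subseteq> C" unfolding D_def by (auto simp: C_def)
  have "insert A S \<subseteq> D" unfolding D_def C_def by (auto simp: Ball_def)
  have "comm_subalgebra D"
    unfolding comm_subalgebra_def
  proof (intro conjI ballI allI)
    show "mat 1 \<in> D" by (simp add: D_def)
    fix X Y assume X: "X \<in> D" and Y: "Y \<in> D"
    show "X + Y \<in> D"
      using X Y unfolding D_def by (simp add: matrix_add_ldistrib matrix_add_rdistrib)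
    show "X ** Y \<in> D"
      using X Y unfolding D_def by (simp add: matrix_mul_assoc) (metis matrix_mul_assoc)
    show "X ** Y = Y ** X"
      using X Y \<open>D \<subseteq> C\<close> unfolding D_def by blast
  next
    fix c X assume X: "X \<in> D"
    have "mat c ** X ** Y = Y ** (mat c ** X)" if "Y \<in> C" for Y
    proof -
      have "mat c ** X ** Y = mat c ** (Y ** X)"
        using X that unfolding D_def by (simp add: matrix_mul_assoc[symmetric])
      also have "\<dots> = Y ** (mat c ** X)"
        by (simp add: matrix_mul_assoc mat_mult_commute[of c Y])
      finally show ?thesis .
    qed
    then show "mscale c X \<in> D" unfolding D_def mscale_eq_mat_mult by blast
  qed
  then have "D = S" using max \<open>insert A S \<subseteq> D\<close> unfolding maximal_comm_subalgebra_def by blast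
  then show "A \<in> S" using \<open>insert A S \<subseteq> D\<close> by blast
qed

lemma matrix_inv_matrix_inv:
  fixes A :: "'k::semiring_1^'n^'n"
  assumes "invertible A"
  shows "invertible (matrix_inv A)" and "matrix_inv (matrix_inv A) = A"
proof -
  show inv: "invertible (matrix_inv A)"
    using assms matrix_inv_left matrix_inv_right unfolding invertible_def by blast
  have "matrix_inv (matrix_inv A) = matrix_inv (matrix_inv A) ** (matrix_inv A ** A)"
    using matrix_inv_left[OF assms] by simp
  also have "\<dots> = A"
    using matrix_inv_left[OF inv] by (simp add: matrix_mul_assoc)
  finally show "matrix_inv (matrix_inv A) = A" .
qed

lemma chi_fixes_iff_commute:
  fixes A :: "'k::field^'n^'n"
  assumes "invertible A"
  shows "chi A F = F \<longleftrightarrow> A ** F = F ** A"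
proof
  assume "chi A F = F"
  then have "A ** F ** matrix_inv A ** A = F ** A" by (simp add: chi_def)
  then show "A ** F = F ** A" using matrix_inv_left[OF assms] by (simp add: matrix_mul_assoc[symmetric])
next
  assume "A ** F = F ** A"
  then show "chi A F = F" using matrix_inv_right[OF assms] by (simp add: chi_def matrix_mul_assoc[symmetric])
qed

lemma chi_mat:
  assumes "invertible (mat c :: 'k::field^'n^'n)"
  shows "chi (mat c) F = (F :: 'k^'n^'n)"
  using chi_fixes_iff_commute[OF assms] mat_mult_commute[of c F] by simp

lemma is_subspace_range_matrix: "is_subspace (range ((*v) (A :: 'k::field^'n^'m)))"
  unfolding is_subspace_def
proof (intro conjI ballI allI)
  show "0 \<in> range ((*v) A)" by (rule range_eqI[of _ _ 0]) simp
  fix x y assume "x \<in> range ((*v) A)" "y \<in> range ((*v) A)"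
  then obtain a b where "x = A *v a" "y = A *v b" by blast
  then show "x + y \<in> range ((*v) A)" by (metis matrix_vector_right_distrib range_eqI)
next
  fix c x assume "x \<in> range ((*v) A)"
  then obtain a where "x = A *v a" by blast
  then show "c *s x \<in> range ((*v) A)" by (metis vector_scalar_commute range_eqI)
qed

lemma range_matrix_eq_zero_iff: "range ((*v) A) = {0} \<longleftrightarrow> (A :: 'k::field^'n^'m) = 0"
  by (auto simp: matrix_eq)

lemma matrix_inv_in_orth_group:
  assumes "\<sigma> \<in> orth_group \<Theta>"
  shows "matrix_inv \<sigma> \<in> orth_group \<Theta>"
proof -
  have inv: "invertible \<sigma>" and orth: "\<And>u. \<Theta> (\<lambda>i. \<sigma> *v u i) = \<Theta> u"
    using assms unfolding orth_group_def by auto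
  have "\<Theta> (\<lambda>i. matrix_inv \<sigma> *v u i) = \<Theta> u" for u
    using orth[of "\<lambda>i. matrix_inv \<sigma> *v u i"]
    by (simp add: matrix_vector_mul_assoc matrix_inv_right[OF inv])
  then show ?thesis
    using matrix_inv_matrix_inv(1)[OF inv] unfolding orth_group_def by blast
qed

lemma chi_in_cent:
  assumes "\<sigma> \<in> orth_group \<Theta>" and "f \<in> cent \<Theta>"
  shows "chi \<sigma> f \<in> cent \<Theta>"
proof -
  have inv: "invertible \<sigma>" and orth: "\<And>u. \<Theta> (\<lambda>i. \<sigma> *v u i) = \<Theta> u"
    using assms(1) unfolding orth_group_def by auto
  have slot: "\<Theta> (u(j := chi \<sigma> f *v u j)) = \<Theta> (w(j := f *v w j))"
    if "w = (\<lambda>i. matrix_inv \<sigma> *v u i)" for u w j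
  proof -
    have "u(j := chi \<sigma> f *v u j) = (\<lambda>i. \<sigma> *v (w(j := f *v w j)) i)"
      using that by (auto simp: fun_eq_iff chi_def matrix_vector_mul_assoc matrix_mul_assoc matrix_inv_right[OF inv])
    then show ?thesis using orth by metis
  qed
  have "\<Theta> (u(0 := chi \<sigma> f *v u 0)) = \<Theta> (u(1 := chi \<sigma> f *v u 1))" for u
    using assms(2) unfolding cent_def slot[OF refl] by blast
  then show ?thesis unfolding cent_def by blast
qed

lemma chi_in_alg_auts:
  assumes "\<sigma> \<in> orth_group \<Theta>"
  shows "chi \<sigma> \<in> alg_auts (cent \<Theta>)"
proof -
  have inv: "invertible \<sigma>" using assms unfolding orth_group_def by blast
  note inv_l = matrix_inv_left[OF inv] and inv_r = matrix_inv_right[OF inv]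
  show ?thesis
    unfolding alg_auts_def
  proof (intro CollectI conjI ballI allI)
    show "bij_betw (chi \<sigma>) (cent \<Theta>) (cent \<Theta>)"
    proof (rule bij_betwI[where g = "chi (matrix_inv \<sigma>)"])
      show "chi \<sigma> \<in> cent \<Theta> \<rightarrow> cent \<Theta>" "chi (matrix_inv \<sigma>) \<in> cent \<Theta> \<rightarrow> cent \<Theta>"
        using chi_in_cent assms matrix_inv_in_orth_group by blast+
    qed (simp_all add: chi_def matrix_inv_matrix_inv(2)[OF inv] matrix_mul_assoc inv_l inv_r,
         simp_all add: matrix_mul_assoc[symmetric] inv_l inv_r)
    show "chi \<sigma> (mat 1) = mat 1" by (simp add: chi_def inv_r)
    fix x y
    show "chi \<sigma> (x + y) = chi \<sigma> x + chi \<sigma> y"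
      by (simp add: chi_def matrix_add_ldistrib matrix_add_rdistrib)
    show "chi \<sigma> (x ** y) = chi \<sigma> x ** chi \<sigma> y"
      by (simp add: chi_def matrix_mul_assoc) (simp add: matrix_mul_assoc[symmetric] inv_l)
  next
    fix c x
    show "chi \<sigma> (mscale c x) = mscale c (chi \<sigma> x)"
      by (simp add: chi_def mscale_eq_mat_mult matrix_mul_assoc mat_mult_commute[of c \<sigma>, symmetric])
  qed
qed

locale sym_dlinear_form =
  fixes \<Theta> :: "(nat \<Rightarrow> 'k::field^'n) \<Rightarrow> 'k" and d :: nat
  assumes d_linear: "d_linear_form d \<Theta>" and symmetric: "symmetric_form d \<Theta>" and two_le_d: "2 \<le> d"
begin

lemma form_cong: "(\<And>i. i < d \<Longrightarrow> u i = w i) \<Longrightarrow> \<Theta> u = \<Theta> w"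
  using d_linear unfolding d_linear_form_def by blast

lemma form_add_slot: "i < d \<Longrightarrow> \<Theta> (u(i := x + y)) = \<Theta> (u(i := x)) + \<Theta> (u(i := y))"
  using d_linear unfolding d_linear_form_def by blast

lemma form_smult_slot: "i < d \<Longrightarrow> \<Theta> (u(i := c *s x)) = c * \<Theta> (u(i := x))"
  using d_linear unfolding d_linear_form_def by blast

lemma form_diff_slot: "i < d \<Longrightarrow> \<Theta> (u(i := x - y)) = \<Theta> (u(i := x)) - \<Theta> (u(i := y))"
  using form_add_slot[of i u x "(-1) *s y"] form_smult_slot[of i u "-1" y]
  by (simp add: vector_sneg_minus1[symmetric])

lemma form_permute: "p permutes {..<d} \<Longrightarrow> \<Theta> (u \<circ> p) = \<Theta> u"
  using symmetric unfolding symmetric_form_def by blast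

lemma mat_in_cent: "mat c \<in> cent \<Theta>"
  using form_smult_slot[of 0 _ c] form_smult_slot[of 1 _ c] two_le_d
  by (simp add: cent_def matrix_vector_mult_mat)

lemma cent_move_slot:
  assumes f: "f \<in> cent \<Theta>" and "i < d"
  shows "\<Theta> (u(i := f *v u i)) = \<Theta> (u(0 := f *v u 0))"
proof -
  have swap01: "\<Theta> (w(0 := f *v w 0)) = \<Theta> (w(1 := f *v w 1))" for w
    using f unfolding cent_def by blast
  consider "i = 0" | "i = 1" | "2 \<le> i" by linarith
  then show ?thesis
  proof cases
    case 3
    define \<tau> where "\<tau> = Transposition.transpose (1::nat) i"
    have \<tau>: "\<tau> permutes {..<d}"
      unfolding \<tau>_def using \<open>i < d\<close> two_le_d by (intro permutes_swap_id) auto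
    have "u(i := f *v u i) \<circ> \<tau> = (u \<circ> \<tau>)(1 := f *v (u \<circ> \<tau>) 1)"
      and "(u \<circ> \<tau>)(0 := f *v (u \<circ> \<tau>) 0) \<circ> \<tau> = u(0 := f *v u 0)"
      using 3 by (auto simp: \<tau>_def Transposition.transpose_def fun_eq_iff)
    then show ?thesis using form_permute[OF \<tau>] swap01 by metis
  qed (use swap01 in simp_all)
qed

lemma form_cent_prefix:
  assumes f: "f \<in> cent \<Theta>" and "m \<le> d"
  shows "\<Theta> (\<lambda>j. if j < m then f *v y j else y j) = \<Theta> (y(0 := matpow f m *v y 0))"
  using \<open>m \<le> d\<close>
proof (induction m arbitrary: y)
  case 0
  then show ?case by (simp add: fun_upd_idem)
next
  case (Suc m)
  show ?case
  proof (cases "m = 0")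
    case True
    then show ?thesis by (simp add: fun_eq_iff cong: if_cong)
  next
    case False
    define u where "u = (\<lambda>j. if j < m then f *v y j else y j)"
    define y' where "y' = y(0 := f *v y 0)"
    have "(\<lambda>j. if j < Suc m then f *v y j else y j) = u(m := f *v u m)"
      by (auto simp: u_def fun_eq_iff)
    then have "\<Theta> (\<lambda>j. if j < Suc m then f *v y j else y j) = \<Theta> (u(0 := f *v u 0))"
      using cent_move_slot[OF f, of m u] Suc.prems by simp
    also have "u(0 := f *v u 0) = (\<lambda>j. if j < m then f *v y' j else y' j)"
      using False by (auto simp: u_def y'_def fun_eq_iff)
    also have "\<Theta> \<dots> = \<Theta> (y'(0 := matpow f m *v y' 0))"
      using Suc.IH Suc.prems Suc_leD by blast
    also have "y'(0 := matpow f m *v y' 0) = y(0 := matpow f (Suc m) *v y 0)"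
      by (simp add: y'_def matrix_vector_mul_assoc matpow_commute)
    finally show ?thesis .
  qed
qed

lemma form_cent_all_slots:
  assumes "f \<in> cent \<Theta>"
  shows "\<Theta> (\<lambda>j. f *v y j) = \<Theta> (y(0 := matpow f d *v y 0))"
proof -
  have "\<Theta> (\<lambda>j. f *v y j) = \<Theta> (\<lambda>j. if j < d then f *v y j else y j)" by (rule form_cong) simp
  then show ?thesis using form_cent_prefix[OF assms, of d y] by simp
qed

lemma form_split_cent_idempotent:
  assumes E: "E \<in> cent \<Theta>" and F: "mat 1 - E \<in> cent \<Theta>" and idem: "E ** E = E"
  shows "\<Theta> y = \<Theta> (\<lambda>j. E *v y j) + \<Theta> (\<lambda>j. (mat 1 - E) *v y j)"
proof -
  have "0 < d" using two_le_d by simp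
  have F_idem: "(mat 1 - E) ** (mat 1 - E) = mat 1 - E"
    using idem by (simp add: matrix_diff_ldistrib matrix_diff_rdistrib)
  have "\<Theta> (\<lambda>j. (mat 1 - E) *v y j) = \<Theta> (y(0 := (mat 1 - E) *v y 0))"
    using form_cent_all_slots[OF F] matpow_idempotent[OF F_idem \<open>0 < d\<close>] by simp
  moreover have "\<Theta> (\<lambda>j. E *v y j) = \<Theta> (y(0 := E *v y 0))"
    using form_cent_all_slots[OF E] matpow_idempotent[OF idem \<open>0 < d\<close>] by simp
  moreover have "y = y(0 := E *v y 0 + (mat 1 - E) *v y 0)"
    by (simp add: matrix_vector_mult_diff_rdistrib)
  ultimately show ?thesis
    using form_add_slot[OF \<open>0 < d\<close>] by metis
qed

lemma cent_idempotent_trivial: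
  assumes ind: "indecomposable_form d \<Theta>"
    and E_cent: "E \<in> cent \<Theta>" and F_cent: "mat 1 - E \<in> cent \<Theta>" and idem: "E ** E = E"
  shows "E = 0 \<or> E = mat 1"
proof (rule ccontr)
  assume nontrivial: "\<not> (E = 0 \<or> E = mat 1)"
  define F where "F = mat 1 - E"
  have "F ** F = F" "E ** F = 0" "F ** E = 0"
    using idem by (simp_all add: F_def matrix_diff_ldistrib matrix_diff_rdistrib)
  then have EE: "E *v (E *v a) = E *v a" and FF: "F *v (F *v a) = F *v a"
    and EF: "E *v (F *v a) = 0" and FE: "F *v (E *v a) = 0" for a
    using idem by (simp_all add: matrix_vector_mul_assoc)
  have sum: "E *v a + F *v a = a" for a
    by (simp add: F_def matrix_vector_mult_diff_rdistrib)
  have "decomposable_form d \<Theta>"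
    unfolding decomposable_form_def
  proof (intro exI conjI allI impI)
    show "is_subspace (range ((*v) E))" "is_subspace (range ((*v) F))"
      by (rule is_subspace_range_matrix)+
    show "range ((*v) E) \<noteq> {0}" "range ((*v) F) \<noteq> {0}"
      using nontrivial by (auto simp: range_matrix_eq_zero_iff F_def)
    show "range ((*v) E) \<inter> range ((*v) F) = {0}"
    proof safe
      fix a b assume "E *v a = F *v b"
      then show "E *v a = 0" by (metis EE EF)
    qed (rule range_eqI[of _ _ 0], simp)+
    show "\<exists>a\<in>range ((*v) E). \<exists>b\<in>range ((*v) F). x = a + b" for x
      using sum[of x] by (metis rangeI)
  next
    fix v w :: "nat \<Rightarrow> 'k^'n"
    assume vw: "\<forall>i<d. v i \<in> range ((*v) E) \<and> w i \<in> range ((*v) F)"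
    have "E *v (v i + w i) = v i" "F *v (v i + w i) = w i" if "i < d" for i
      using vw that by (auto simp: matrix_vector_right_distrib EE FF EF FE)
    then have "\<Theta> (\<lambda>j. E *v (v j + w j)) = \<Theta> v" "\<Theta> (\<lambda>j. F *v (v j + w j)) = \<Theta> w"
      by (auto intro: form_cong)
    then show "\<Theta> (\<lambda>i. v i + w i) = \<Theta> v + \<Theta> w"
      using form_split_cent_idempotent[OF E_cent F_cent idem, of "\<lambda>i. v i + w i"] by (simp add: F_def)
  qed
  with ind show False by (simp add: indecomposable_form_def)
qed

lemma orth_cent_matpow_eq_id:
  assumes reg: "regular_form d \<Theta>" and orth: "\<sigma> \<in> orth_group \<Theta>" and "\<sigma> \<in> cent \<Theta>"
  shows "matpow \<sigma> d = mat 1"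
proof -
  have "\<Theta> (u(0 := matpow \<sigma> d *v x - x)) = 0" for u x
  proof -
    have "\<Theta> (u(0 := matpow \<sigma> d *v x)) = \<Theta> (\<lambda>j. \<sigma> *v (u(0 := x)) j)"
      using form_cent_all_slots[OF \<open>\<sigma> \<in> cent \<Theta>\<close>, of "u(0 := x)"] by simp
    also have "\<dots> = \<Theta> (u(0 := x))"
      using orth unfolding orth_group_def by blast
    finally show ?thesis using two_le_d by (simp add: form_diff_slot)
  qed
  then have "matpow \<sigma> d *v x = x" for x
    using reg unfolding regular_form_def by (metis eq_iff_diff_eq_0)
  then show ?thesis by (simp add: matrix_eq)
qed

lemma roots_of_unity_in_orth_group: "roots_of_unity_id d \<subseteq> orth_group \<Theta>"
proof
  fix \<sigma> :: "'k^'n^'n" assume "\<sigma> \<in> roots_of_unity_id d"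
  then obtain \<zeta> where \<sigma>: "\<sigma> = mat \<zeta>" and "\<zeta> ^ d = 1" unfolding roots_of_unity_id_def by blast
  then have "\<zeta> \<noteq> 0" using two_le_d by (metis power_0_left not_numeral_le_zero zero_neq_one)
  then have "invertible \<sigma>"
    unfolding invertible_def \<sigma> by (intro exI[of _ "mat (inverse \<zeta>)"]) (simp add: mat_mult_mat)
  moreover have "\<Theta> (\<lambda>i. \<sigma> *v u i) = \<Theta> u" for u
    using form_cent_all_slots[OF mat_in_cent, of \<zeta> u] by (simp add: \<sigma> matpow_mat \<open>\<zeta> ^ d = 1\<close>)
  ultimately show "\<sigma> \<in> orth_group \<Theta>" by (simp add: orth_group_def)
qed

end

theorem theorem4p2:
  fixes \<Theta> :: "(nat \<Rightarrow> 'k::field_char_0 ^'n) \<Rightarrow> 'k" and d :: nat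
  assumes "alg_closed_field TYPE('k)"
    and "d \<ge> 3"
    and "d_linear_form d \<Theta>" and "symmetric_form d \<Theta>"
    and "regular_form d \<Theta>" and "indecomposable_form d \<Theta>"
    and "has_maximal_center \<Theta>"
  shows "(\<forall>\<sigma>\<in>orth_group \<Theta>. chi \<sigma> \<in> alg_auts (cent \<Theta>))
    \<and> {\<sigma> \<in> orth_group \<Theta>. \<forall>f\<in>cent \<Theta>. chi \<sigma> f = f} = roots_of_unity_id d"
proof -
  interpret sym_dlinear_form \<Theta> d using assms(2-4) by unfold_locales auto
  have max: "maximal_comm_subalgebra (cent \<Theta>)" using assms(7) by (simp add: has_maximal_center_def)
  then have S: "comm_subalgebra (cent \<Theta>)" by (simp add: maximal_comm_subalgebra_def)
  have idem: "E = 0 \<or> E = mat 1" if "E \<in> cent \<Theta>" "E ** E = E" for E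
    using cent_idempotent_trivial[OF assms(6) that(1) _ that(2)]
      comm_subalgebra_diff[OF S mat_in_cent that(1)] by blast
  have kernel: "\<sigma> \<in> roots_of_unity_id d" if "\<sigma> \<in> orth_group \<Theta>" "\<forall>f\<in>cent \<Theta>. chi \<sigma> f = f" for \<sigma>
  proof -
    have "\<sigma> \<in> cent \<Theta>"
      using maximal_comm_subalgebra_commutant[OF max] chi_fixes_iff_commute that
      unfolding orth_group_def by auto
    moreover have "matpow \<sigma> d = mat 1"
      using orth_cent_matpow_eq_id[OF assms(5) that(1) calculation] .
    ultimately show ?thesis
      using scalar_if_matpow_eq_id[OF assms(1) S _ idem] assms(2) unfolding roots_of_unity_id_def by auto
  qed
  have "chi \<sigma> f = f" if "\<sigma> \<in> roots_of_unity_id d" for \<sigma> f :: "'k^'n^'n"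
    using that roots_of_unity_in_orth_group chi_mat
    unfolding roots_of_unity_id_def orth_group_def by fastforce
  then show ?thesis
    using chi_in_alg_auts kernel roots_of_unity_in_orth_group by blast
qed

end
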